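(* Let $d\ge1$ and $x,y,u,v\in\mathbb{R}^d_{>0}$, and set $a^\pm:=s^\pm(x,y)$, $b^\pm:=s^\pm(u,v)$. Assume that $\frac{y_i}{x_i}\in\{a^-,a^+\}$ and $\frac{v_i}{u_i}\in\{b^-,b^+\}$ for all $1\le i\le d$. Then there exist $x',y',u',v'\in\mathbb{R}^2_{>0}$ such that \[ s^\pm(x',y')=a^\pm,\qquad s^\pm(u',v')=b^\pm,\qquad F_2(x',y';u',v')\ge F_d(x,y;u,v). \]
   Context: For $x,y\in\mathbb{R}^d_{>0}$ define $s^+(x,y)=\max_i \frac{y_i}{x_i}$ and $s^-(x,y)=\min_i\frac{y_i}{x_i}$. Define $F_d:(\mathbb{R}^d_{>0})^4\to\mathbb{R}_{>0}$ by $F_d(x,y;u,v)=\frac{(x\cdot u)(y\cdot v)}{(x\cdot v)(y\cdot u)}$, where $\cdot$ is the standard Euclidean dot product; $F_2$ is the case $d=2$. *)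

theory Defs
  imports "HOL-Analysis.Analysis"
begin

text \<open>Vectors in R^d are modelled as real^'d for a finite index type 'd (d = CARD('d) >= 1).\<close>

definition pos_vec :: "real^'d \<Rightarrow> bool" where
  "pos_vec x \<longleftrightarrow> (\<forall>i. x $ i > 0)"

definition s_plus :: "real^'d \<Rightarrow> real^'d \<Rightarrow> real" where
  "s_plus x y = Max (range (\<lambda>i. y $ i / x $ i))"

definition s_minus :: "real^'d \<Rightarrow> real^'d \<Rightarrow> real" where
  "s_minus x y = Min (range (\<lambda>i. y $ i / x $ i))"

definition F :: "real^'d \<Rightarrow> real^'d \<Rightarrow> real^'d \<Rightarrow> real^'d \<Rightarrow> real" where
  "F x y u v = ((x \<bullet> u) * (y \<bullet> v)) / ((x \<bullet> v) * (y \<bullet> u))"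

end

theory Submission
  imports Defs
begin

(* Put w_i = x_i u_i, r_i = y_i / x_i and t_i = v_i / u_i.  Then
   F_d(x,y;u,v) = (\<Sum>w) (\<Sum>w r t) / ((\<Sum>w t) (\<Sum>w r)), and since r_i and t_i only take the
   values a^-, a^+ and b^-, b^+, this depends only on the masses a, b, c, d of the four classes
   (r_i, t_i) = (a^-,b^-), (a^-,b^+), (a^+,b^-), (a^+,b^+).  Writing a^- = a1^2, a^+ = a2^2,
   b^- = b1^2, b^+ = b2^2, the quotient is at most ((a1 b1 + a2 b2) / (a2 b1 + a1 b2))^2: the
   difference of the cleared numerators factors as (a2^2 - a1^2) (b2^2 - b1^2) times a
   polynomial in a, b, c, d with nonnegative terms.  In dimension two the bound is attained
   by putting the masses a2 b2 and a1 b1 on the classes (a^-,b^-) and (a^+,b^+). *)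

lemma
  fixes x y :: "real^'d"
  shows s_minus_le_ratio: "s_minus x y \<le> y $ i / x $ i"
    and ratio_le_s_plus: "y $ i / x $ i \<le> s_plus x y"
  unfolding s_minus_def s_plus_def by auto

lemma s_minus_le_s_plus: "s_minus x y \<le> s_plus x y"
  using s_minus_le_ratio ratio_le_s_plus by (rule order_trans)

lemma s_minus_pos:
  assumes "pos_vec x" "pos_vec y"
  shows "0 < s_minus x y"
proof -
  have "s_minus x y \<in> range (\<lambda>i. y $ i / x $ i)"
    unfolding s_minus_def by (intro Min_in) auto
  then show ?thesis
    using assms by (auto simp: pos_vec_def)
qed

lemma
  fixes x y :: "real^2"
  shows s_plus_2: "s_plus x y = max (y $ 1 / x $ 1) (y $ 2 / x $ 2)"
    and s_minus_2: "s_minus x y = min (y $ 1 / x $ 1) (y $ 2 / x $ 2)"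
  unfolding s_plus_def s_minus_def UNIV_2 by auto

lemma F_eq_weighted_ratio:
  fixes x y u v :: "real^'d"
  assumes "pos_vec x" "pos_vec u"
  shows "F x y u v =
    (\<Sum>i\<in>UNIV. x$i * u$i) * (\<Sum>i\<in>UNIV. x$i * u$i * (y$i / x$i) * (v$i / u$i))
    / ((\<Sum>i\<in>UNIV. x$i * u$i * (v$i / u$i)) * (\<Sum>i\<in>UNIV. x$i * u$i * (y$i / x$i)))"
proof -
  have "x$i \<noteq> 0" "u$i \<noteq> 0" for i
    using assms by (auto simp: pos_vec_def dest: less_imp_neq[symmetric])
  then show ?thesis
    unfolding F_def inner_vec_def inner_real_def by (simp add: mult_ac)
qed

definition class_mass :: "('i::finite \<Rightarrow> real) \<Rightarrow> ('i \<Rightarrow> bool) \<Rightarrow> ('i \<Rightarrow> bool) \<Rightarrow> bool \<Rightarrow> bool \<Rightarrow> real"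
  where "class_mass w X Y p q = (\<Sum>i | X i = p \<and> Y i = q. w i)"

lemma class_mass_nonneg: "(\<And>i. 0 \<le> w i) \<Longrightarrow> 0 \<le> class_mass w X Y p q"
  unfolding class_mass_def by (simp add: sum_nonneg)

lemma sum_by_class_mass:
  fixes w :: "'i::finite \<Rightarrow> real"
  shows "(\<Sum>i\<in>UNIV. w i * g (X i) (Y i)) = (\<Sum>p\<in>UNIV. \<Sum>q\<in>UNIV. g p q * class_mass w X Y p q)"
proof -
  have "(\<Sum>i\<in>UNIV. w i * g (X i) (Y i))
      = (\<Sum>i\<in>UNIV. \<Sum>p\<in>UNIV. \<Sum>q\<in>UNIV. if X i = p \<and> Y i = q then w i * g p q else 0)"
    by (intro sum.cong refl) (simp add: UNIV_bool)
  also have "\<dots> = (\<Sum>p\<in>UNIV. \<Sum>i\<in>UNIV. \<Sum>q\<in>UNIV. if X i = p \<and> Y i = q then w i * g p q else 0)"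
    by (rule sum.swap)
  also have "\<dots> = (\<Sum>p\<in>UNIV. \<Sum>q\<in>UNIV. \<Sum>i\<in>UNIV. if X i = p \<and> Y i = q then w i * g p q else 0)"
    by (rule sum.cong[OF refl], rule sum.swap)
  also have "\<dots> = (\<Sum>p\<in>UNIV. \<Sum>q\<in>UNIV. g p q * class_mass w X Y p q)"
    unfolding class_mass_def sum_distrib_left by (simp add: sum.If_cases mult_ac)
  finally show ?thesis .
qed

lemma four_class_polynomial_bound:
  fixes a b c d a1 a2 b1 b2 :: real
  assumes "0 \<le> a" "0 \<le> b" "0 \<le> c" "0 \<le> d" "0 < a1" "a1 \<le> a2" "0 < b1" "b1 \<le> b2"
  shows "(a2*b1 + a1*b2)^2 * (a+b+c+d) * (a1^2*b1^2*a + a1^2*b2^2*b + a2^2*b1^2*c + a2^2*b2^2*d)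
     \<le> (a1*b1 + a2*b2)^2 * (b1^2*(a+c) + b2^2*(b+d)) * (a1^2*(a+b) + a2^2*(c+d))"
proof -
  define E where "E = (a2^2 - a1^2) * (b2^2 - b1^2)"
  define Q where "Q = (a1*b1*a - a2*b2*d)^2 + a1^2*b2^2*b*b + a2^2*b1^2*c*c
     + a1^2*(b1^2 + b2^2)*a*b + b1^2*(a1^2 + a2^2)*a*c + b2^2*(a1^2 + a2^2)*b*d
     + a2^2*(b1^2 + b2^2)*c*d + ((a1*b1 + a2*b2)^2 + a2^2*b1^2 + a1^2*b2^2)*b*c"
  have factored: "(a1*b1 + a2*b2)^2 * (b1^2*(a+c) + b2^2*(b+d)) * (a1^2*(a+b) + a2^2*(c+d))
     - (a2*b1 + a1*b2)^2 * (a+b+c+d) * (a1^2*b1^2*a + a1^2*b2^2*b + a2^2*b1^2*c + a2^2*b2^2*d)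
     = E * Q"
    unfolding E_def Q_def by (simp add: algebra_simps power2_eq_square)
  have "a1^2 \<le> a2^2" "b1^2 \<le> b2^2"
    using assms by (auto intro: power_mono)
  then have "0 \<le> E"
    unfolding E_def by simp
  moreover have "0 \<le> Q"
    unfolding Q_def using assms by (intro add_nonneg_nonneg mult_nonneg_nonneg) auto
  ultimately show ?thesis
    using factored mult_nonneg_nonneg[of E Q] by linarith
qed

definition max_cross_ratio :: "real \<Rightarrow> real \<Rightarrow> real \<Rightarrow> real \<Rightarrow> real" where
  "max_cross_ratio am ap bm bp =
     ((sqrt am * sqrt bm + sqrt ap * sqrt bp) / (sqrt ap * sqrt bm + sqrt am * sqrt bp))^2"

lemma four_class_ratio_le_max_cross_ratio:
  fixes a b c d :: real
  assumes "0 \<le> a" "0 \<le> b" "0 \<le> c" "0 \<le> d" "0 < a + b + c + d"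
    and "0 < am" "am \<le> ap" "0 < bm" "bm \<le> bp"
  shows "(a+b+c+d) * (am*bm*a + am*bp*b + ap*bm*c + ap*bp*d)
      / ((bm*(a+c) + bp*(b+d)) * (am*(a+b) + ap*(c+d))) \<le> max_cross_ratio am ap bm bp"
proof -
  define a1 a2 b1 b2 where "a1 = sqrt am" "a2 = sqrt ap" "b1 = sqrt bm" "b2 = sqrt bp"
  have squares: "am = a1^2" "ap = a2^2" "bm = b1^2" "bp = b2^2"
    unfolding a1_a2_b1_b2_def using assms by auto
  have roots: "0 < a1" "a1 \<le> a2" "0 < b1" "b1 \<le> b2"
    unfolding a1_a2_b1_b2_def using assms by auto
  have "0 < bm * (a+b+c+d)" "0 < am * (a+b+c+d)"
    using assms by simp_all
  moreover have "bm * (a+b+c+d) \<le> bm*(a+c) + bp*(b+d)" "am * (a+b+c+d) \<le> am*(a+b) + ap*(c+d)"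
    using assms mult_right_mono[of bm bp "b+d"] mult_right_mono[of am ap "c+d"]
    by (simp_all add: algebra_simps)
  ultimately have "0 < (bm*(a+c) + bp*(b+d)) * (am*(a+b) + ap*(c+d))"
    by simp
  moreover have "0 < (a2*b1 + a1*b2)^2"
    using roots by (intro zero_less_power add_pos_pos mult_pos_pos) auto
  moreover have "max_cross_ratio am ap bm bp = (a1*b1 + a2*b2)^2 / (a2*b1 + a1*b2)^2"
    unfolding max_cross_ratio_def a1_a2_b1_b2_def by (simp add: power_divide)
  moreover have "n / m \<le> p / q" if "0 < m" "0 < q" "q * n \<le> p * m" for n m p q :: real
    using that by (simp add: divide_simps mult.commute)
  ultimately show ?thesis
    using four_class_polynomial_bound[OF assms(1-4) roots] unfolding squares
    by (simp only: mult.assoc)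
qed

lemma weighted_cross_ratio_le_max_cross_ratio:
  fixes w r t :: "'i::finite \<Rightarrow> real"
  assumes "\<And>i. 0 < w i" "\<And>i. r i \<in> {am, ap}" "\<And>i. t i \<in> {bm, bp}"
    and "0 < am" "am \<le> ap" "0 < bm" "bm \<le> bp"
  shows "(\<Sum>i\<in>UNIV. w i) * (\<Sum>i\<in>UNIV. w i * r i * t i)
      / ((\<Sum>i\<in>UNIV. w i * t i) * (\<Sum>i\<in>UNIV. w i * r i)) \<le> max_cross_ratio am ap bm bp"
proof -
  define X Y where "X i \<longleftrightarrow> r i = ap" and "Y i \<longleftrightarrow> t i = bp" for i
  define m where "m = class_mass w X Y"
  have r: "r i = (if X i then ap else am)" and t: "t i = (if Y i then bp else bm)" for i
    using assms(2,3)[of i] unfolding X_def Y_def by auto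
  have "(\<Sum>i\<in>UNIV. w i * g (X i) (Y i))
      = g False False * m False False + g False True * m False True
      + g True False * m True False + g True True * m True True" for g
    unfolding m_def sum_by_class_mass by (simp add: UNIV_bool)
  from this[of "\<lambda>_ _. 1"] this[of "\<lambda>p _. if p then ap else am"]
    this[of "\<lambda>_ q. if q then bp else bm"]
    this[of "\<lambda>p q. (if p then ap else am) * (if q then bp else bm)"]
  have "(\<Sum>i\<in>UNIV. w i) = m False False + m False True + m True False + m True True"
    "(\<Sum>i\<in>UNIV. w i * r i) = am * (m False False + m False True) + ap * (m True False + m True True)"
    "(\<Sum>i\<in>UNIV. w i * t i) = bm * (m False False + m True False) + bp * (m False True + m True True)"
    "(\<Sum>i\<in>UNIV. w i * r i * t i) = am * bm * m False False + am * bp * m False True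
      + ap * bm * m True False + ap * bp * m True True"
    by (simp_all add: r t algebra_simps)
  moreover have "0 \<le> m p q" for p q
    unfolding m_def using assms(1) by (simp add: class_mass_nonneg less_imp_le)
  moreover have "0 < (\<Sum>i\<in>UNIV. w i)"
    using assms(1) by (simp add: sum_pos)
  ultimately show ?thesis
    using four_class_ratio_le_max_cross_ratio[of "m False False" "m False True" "m True False" "m True True"]
      assms(4-7) by (simp add: algebra_simps)
qed

lemma F_le_max_cross_ratio:
  fixes x y u v :: "real^'d"
  assumes "pos_vec x" "pos_vec y" "pos_vec u" "pos_vec v"
    and "\<forall>i. y $ i / x $ i \<in> {s_minus x y, s_plus x y}"
    and "\<forall>i. v $ i / u $ i \<in> {s_minus u v, s_plus u v}"
  shows "F x y u v \<le> max_cross_ratio (s_minus x y) (s_plus x y) (s_minus u v) (s_plus u v)"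
  unfolding F_eq_weighted_ratio[OF assms(1,3)]
  using assms
  by (intro weighted_cross_ratio_le_max_cross_ratio)
    (auto simp: pos_vec_def s_minus_pos s_minus_le_s_plus)

lemma max_cross_ratio_attained_in_dim_2:
  assumes "0 < am" "am \<le> ap" "0 < bm" "bm \<le> bp"
  shows "\<exists>x y u v :: real^2. pos_vec x \<and> pos_vec y \<and> pos_vec u \<and> pos_vec v \<and>
    s_minus x y = am \<and> s_plus x y = ap \<and> s_minus u v = bm \<and> s_plus u v = bp \<and>
    F x y u v = max_cross_ratio am ap bm bp"
proof -
  define a1 a2 b1 b2 where "a1 = sqrt am" "a2 = sqrt ap" "b1 = sqrt bm" "b2 = sqrt bp"
  have squares: "am = a1^2" "ap = a2^2" "bm = b1^2" "bp = b2^2"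
    unfolding a1_a2_b1_b2_def using assms by auto
  have roots: "0 < a1" "a1 \<le> a2" "0 < b1" "b1 \<le> b2"
    unfolding a1_a2_b1_b2_def using assms by auto
  define p q where "p = a2 * b2" "q = a1 * b1"
  define x y u v :: "real^2"
    where "x = vector [1, 1]" "y = vector [am, ap]" "u = vector [p, q]" "v = vector [bm * p, bp * q]"
  have pq: "0 < p" "0 < q"
    unfolding p_q_def using roots by auto
  have "F x y u v = (p + q) * (am*bm*p + ap*bp*q) / ((bm*p + bp*q) * (am*p + ap*q))"
    unfolding F_def inner_vec_def inner_real_def sum_2 x_y_u_v_def by (simp add: algebra_simps)
  also have "\<dots> = (a1*a2*b1*b2 * (a1*b1 + a2*b2)^2) / (a1*a2*b1*b2 * (a2*b1 + a1*b2)^2)"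
    unfolding squares p_q_def by (simp add: algebra_simps power2_eq_square)
  also have "\<dots> = max_cross_ratio am ap bm bp"
    unfolding max_cross_ratio_def a1_a2_b1_b2_def using assms by (simp add: power_divide)
  finally have "F x y u v = max_cross_ratio am ap bm bp" .
  moreover have "pos_vec x" "pos_vec y" "pos_vec u" "pos_vec v"
    unfolding pos_vec_def forall_2 x_y_u_v_def using assms pq by auto
  moreover have "s_minus x y = am" "s_plus x y = ap" "s_minus u v = bm" "s_plus u v = bp"
    unfolding s_minus_2 s_plus_2 x_y_u_v_def using assms pq by auto
  ultimately show ?thesis
    by blast
qed

theorem mainTheorem7:
  fixes x y u v :: "real^'d"
  assumes "pos_vec x" "pos_vec y" "pos_vec u" "pos_vec v"
    and "\<forall>i. y $ i / x $ i \<in> {s_minus x y, s_plus x y}"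
    and "\<forall>i. v $ i / u $ i \<in> {s_minus u v, s_plus u v}"
  shows "\<exists>x' y' u' v' :: real^2.
           pos_vec x' \<and> pos_vec y' \<and> pos_vec u' \<and> pos_vec v' \<and>
           s_plus x' y' = s_plus x y \<and> s_minus x' y' = s_minus x y \<and>
           s_plus u' v' = s_plus u v \<and> s_minus u' v' = s_minus u v \<and>
           F x' y' u' v' \<ge> F x y u v"
proof -
  obtain x' y' u' v' :: "real^2"
    where witness: "pos_vec x'" "pos_vec y'" "pos_vec u'" "pos_vec v'"
      "s_minus x' y' = s_minus x y" "s_plus x' y' = s_plus x y"
      "s_minus u' v' = s_minus u v" "s_plus u' v' = s_plus u v"
      "F x' y' u' v' = max_cross_ratio (s_minus x y) (s_plus x y) (s_minus u v) (s_plus u v)"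
    using max_cross_ratio_attained_in_dim_2 s_minus_pos s_minus_le_s_plus assms(1-4) by metis
  moreover have "F x y u v \<le> F x' y' u' v'"
    using F_le_max_cross_ratio[OF assms] witness(9) by simp
  ultimately show ?thesis
    by blast
qed

end
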